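(* Let $(X,\mathcal{A},p)$ be a standard Borel probability space. For a sub-$\sigma$-algebra $\mathcal{B}\subseteq\mathcal{A}$ let $\overline{\mathcal{B}}=\{A\in\mathcal{A}:\ p(A\,\triangle\,B)=0\text{ for some }B\in\mathcal{B}\}$. If $(\mathcal{B}_n)_{n\ge0}$ is a sequence of sub-$\sigma$-algebras with $\mathcal{B}_{n+1}\subseteq\mathcal{B}_n$ for all $n$, then $\bigcap_n\overline{\mathcal{B}_n}=\overline{\bigcap_n\mathcal{B}_n}$.
   Context: In the paper $\overline{\mathcal{B}}$ is written $\mathcal{I}_{e_\mathcal{B}}$, the invariant $\sigma$-algebra of the conditional expectation kernel $e_\mathcal{B}(A\mid x)=\mathbb{P}[A\mid\mathcal{B}](x)$; it equals the set of $A\in\mathcal{A}$ almost surely equal to a set in $\mathcal{B}$. *)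

theory Defs
  imports "HOL-Probability.Probability"
begin

definition standard_borel :: "'a measure \<Rightarrow> bool" where
  "standard_borel M \<longleftrightarrow>
     (\<exists>T. completely_metrizable_space T \<and> separable_space T \<and>
          topspace T = space M \<and> sets M = sigma_sets (topspace T) {U. openin T U})"

definition null_closure :: "'a measure \<Rightarrow> 'a set set \<Rightarrow> 'a set set" where
  "null_closure M S = {A \<in> sets M. \<exists>B \<in> S. emeasure M ((A - B) \<union> (B - A)) = 0}"

end

theory Submission
  imports Defs
begin

text \<open>If A agrees almost surely with some \<open>f n \<in> \<B>\<^sub>n\<close> for every n, then A also agrees almost
  surely with \<open>limsup f\<close>, since countably many null sets form a null set. Because the
  \<open>\<B>\<^sub>n\<close> decrease, the tails \<open>f k, f (k + 1), \<dots>\<close> all lie in \<open>\<B>\<^sub>k\<close>, so \<open>limsup f\<close>, which only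
  depends on tails, lies in every \<open>\<B>\<^sub>k\<close>.\<close>

lemma null_closure_mono: "S \<subseteq> T \<Longrightarrow> null_closure M S \<subseteq> null_closure M T"
  unfolding null_closure_def by blast

lemma emeasure_sym_diff_eq_0_iff_AE:
  assumes "A \<in> sets M" "C \<in> sets M"
  shows "emeasure M (sym_diff A C) = 0 \<longleftrightarrow> (AE x in M. x \<in> A \<longleftrightarrow> x \<in> C)"
proof -
  have sets: "sym_diff A C \<in> sets M"
    using assms by blast
  then have "emeasure M (sym_diff A C) = 0 \<longleftrightarrow> sym_diff A C \<in> null_sets M"
    by (simp add: null_sets_def)
  also have "\<dots> \<longleftrightarrow> (AE x in M. x \<notin> sym_diff A C)"
    using sets by (rule AE_iff_null_sets)
  also have "\<dots> \<longleftrightarrow> (AE x in M. x \<in> A \<longleftrightarrow> x \<in> C)"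
    by (intro AE_cong) blast
  finally show ?thesis .
qed

lemma limsup_in_sets_decreasing:
  assumes decreasing: "\<And>n. sets (B (Suc n)) \<subseteq> sets (B n)"
    and f: "\<And>n. f n \<in> sets (B n)"
  shows "limsup f \<in> sets (B k)"
proof -
  have "f (n + k) \<in> sets (B k)" for n
    using f lift_Suc_antimono_le[of "\<lambda>n. sets (B n)", OF decreasing le_add2] by blast
  then have "limsup (\<lambda>n. f (n + k)) \<in> sets (B k)"
    by (rule measurable_limsup)
  then show ?thesis
    by (simp add: limsup_shift_k)
qed

lemma null_closure_INT_decreasing:
  assumes sub: "\<And>n. sets (B n) \<subseteq> sets M"
    and decreasing: "\<And>n. sets (B (Suc n)) \<subseteq> sets (B n)"
  shows "(\<Inter>n. null_closure M (sets (B n))) = null_closure M (\<Inter>n. sets (B n))"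
proof
  show "null_closure M (\<Inter>n. sets (B n)) \<subseteq> (\<Inter>n. null_closure M (sets (B n)))"
    by (intro INT_greatest null_closure_mono) blast
next
  show "(\<Inter>n. null_closure M (sets (B n))) \<subseteq> null_closure M (\<Inter>n. sets (B n))"
  proof
    fix A assume A_closure: "A \<in> (\<Inter>n. null_closure M (sets (B n)))"
    then have A: "A \<in> sets M"
      by (auto simp: null_closure_def)
    have "\<exists>C \<in> sets (B n). AE x in M. x \<in> A \<longleftrightarrow> x \<in> C" for n
    proof -
      obtain C where C: "C \<in> sets (B n)" "emeasure M (sym_diff A C) = 0"
        using A_closure by (auto simp: null_closure_def)
      have "AE x in M. x \<in> A \<longleftrightarrow> x \<in> C"
        using C sub[of n] emeasure_sym_diff_eq_0_iff_AE[OF A, of C] by blast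
      with C(1) show ?thesis
        by blast
    qed
    then obtain f where f: "\<And>n. f n \<in> sets (B n)" and ae: "\<And>n. AE x in M. x \<in> A \<longleftrightarrow> x \<in> f n"
      by metis
    have f_limsup: "limsup f \<in> (\<Inter>n. sets (B n))"
      using limsup_in_sets_decreasing[of B, OF decreasing f] by blast
    have limsup_M: "limsup f \<in> sets M"
      using f_limsup sub by blast
    have "AE x in M. \<forall>n. x \<in> A \<longleftrightarrow> x \<in> f n"
      using ae by (simp add: AE_all_countable)
    then have "AE x in M. x \<in> A \<longleftrightarrow> x \<in> limsup f"
      by eventually_elim (simp add: mem_limsup_iff)
    then have "emeasure M (sym_diff A (limsup f)) = 0"
      by (simp add: emeasure_sym_diff_eq_0_iff_AE[OF A limsup_M])
    with A f_limsup show "A \<in> null_closure M (\<Inter>n. sets (B n))"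
      unfolding null_closure_def by blast
  qed
qed

theorem proposition4p20:
  fixes M :: "'a measure" and B :: "nat \<Rightarrow> 'a measure"
  assumes "prob_space M"
    and "standard_borel M"
    and "\<And>n. subalgebra M (B n)"
    and "\<And>n. sets (B (Suc n)) \<subseteq> sets (B n)"
  shows "(\<Inter>n. null_closure M (sets (B n))) = null_closure M (\<Inter>n. sets (B n))"
  using assms(3,4) by (intro null_closure_INT_decreasing) (auto simp: subalgebra_def)

end
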